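(* Let $G$ be a graph, $X\subseteq V(G)$ with $F:=G-X$ a pseudoforest, and $k$ an integer. Assume that: (1) there is no $v\in X$ with $\mathrm{Conf}_F(\{v\})\ge |X|$; (2) there are no distinct non-adjacent $u,v\in X$ with $\mathrm{Conf}_F(\{u,v\})\ge|X|$; (3) for all distinct $u,v,w\in X$ such that $\{u,v,w\}$ is independent in $G$ and $\mathrm{Conf}_F(\{u,v,w\})\ge|X|$, there is an anchor triangle $P$ with $N_G(V(P))=\{u,v,w\}$. Let $P$ be a connected component of $F$ which is not a non-redundant anchor triangle and such that $\mathrm{Conf}_P(X')=0$ for every chunk $X'$. Then $G$ has an independent set of size at least $k$ if and only if $G-V(P)$ has an independent set of size at least $k-\alpha(P)$.
   Context: All graphs are finite, simple and undirected; a pseudoforest is a graph each of whose connected components contains at most one cycle. $\alpha(H)$ is the independence number of $H$. For a subgraph $F'\subseteq F$ and $X'\subseteq X$, $\mathrm{Conf}_{F'}(X') := \alpha(F') - \alpha(F' - N_G(X'))$, where $N_G(S)$ is the set of vertices outside $S$ adjacent to some vertex of $S$. A chunk is a set $X'\subseteq X$ that is independent in $G$, satisfies $1\le |X'|\le 3$, and has $\mathrm{Conf}_F(X') < |X|$. An anchor triangle is a connected component $P$ of $F$ with $V(P)=\{p_1,p_2,p_3\}$ such that there are vertices $x_1,x_2,x_3\in X$ with $N_G(p_1)=\{p_2,p_3,x_1\}$, $N_G(p_2)=\{p_1,p_3,x_2\}$, $N_G(p_3)=\{p_1,p_2,x_3\}$; it is non-redundant if no other anchor triangle has the same open neighborhood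 in $G$. *)

theory Defs
  imports Main
begin

(* All subgraphs occurring in the statement are induced subgraphs, represented
   by their vertex sets (edges = E restricted to that set). *)
definition graph :: "'a set \<Rightarrow> ('a \<Rightarrow> 'a \<Rightarrow> bool) \<Rightarrow> bool" where
  "graph V E \<longleftrightarrow> finite V \<and> (\<forall>x y. E x y \<longrightarrow> E y x) \<and> (\<forall>x. \<not> E x x)
     \<and> (\<forall>x y. E x y \<longrightarrow> x \<in> V \<and> y \<in> V)"

definition indep :: "('a \<Rightarrow> 'a \<Rightarrow> bool) \<Rightarrow> 'a set \<Rightarrow> bool" where
  "indep E I \<longleftrightarrow> (\<forall>x\<in>I. \<forall>y\<in>I. \<not> E x y)"

definition alpha :: "('a \<Rightarrow> 'a \<Rightarrow> bool) \<Rightarrow> 'a set \<Rightarrow> nat" where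
  "alpha E S = Max {card I | I. I \<subseteq> S \<and> indep E I}"

definition nbh :: "'a set \<Rightarrow> ('a \<Rightarrow> 'a \<Rightarrow> bool) \<Rightarrow> 'a set \<Rightarrow> 'a set" where
  "nbh V E S = {y \<in> V - S. \<exists>x\<in>S. E x y}"

definition conf :: "'a set \<Rightarrow> ('a \<Rightarrow> 'a \<Rightarrow> bool) \<Rightarrow> 'a set \<Rightarrow> 'a set \<Rightarrow> nat" where
  "conf V E F' X' = alpha E F' - alpha E (F' - nbh V E X')"

definition component :: "('a \<Rightarrow> 'a \<Rightarrow> bool) \<Rightarrow> 'a set \<Rightarrow> 'a set \<Rightarrow> bool" where
  "component E S C \<longleftrightarrow>
     (\<exists>x\<in>S. C = {y. (\<lambda>a b. a \<in> S \<and> b \<in> S \<and> E a b)\<^sup>*\<^sup>* x y})"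

definition is_cycle :: "('a \<Rightarrow> 'a \<Rightarrow> bool) \<Rightarrow> 'a set \<Rightarrow> 'a list \<Rightarrow> bool" where
  "is_cycle E S cs \<longleftrightarrow> length cs \<ge> 3 \<and> distinct cs \<and> set cs \<subseteq> S \<and>
     (\<forall>i < length cs. E (cs ! i) (cs ! ((i + 1) mod length cs)))"

(* the cycle as a subgraph is determined by its edge set *)
definition cycle_edges :: "'a list \<Rightarrow> 'a set set" where
  "cycle_edges cs = {{cs ! i, cs ! ((i + 1) mod length cs)} | i. i < length cs}"

definition pseudoforest :: "('a \<Rightarrow> 'a \<Rightarrow> bool) \<Rightarrow> 'a set \<Rightarrow> bool" where
  "pseudoforest E S \<longleftrightarrow> (\<forall>C. component E S C \<longrightarrow>
     (\<forall>c1 c2. is_cycle E C c1 \<and> is_cycle E C c2 \<longrightarrow> cycle_edges c1 = cycle_edges c2))"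

definition chunk :: "'a set \<Rightarrow> ('a \<Rightarrow> 'a \<Rightarrow> bool) \<Rightarrow> 'a set \<Rightarrow> 'a set \<Rightarrow> bool" where
  "chunk V E X X' \<longleftrightarrow> X' \<subseteq> X \<and> indep E X' \<and> 1 \<le> card X' \<and> card X' \<le> 3 \<and>
     conf V E (V - X) X' < card X"

definition anchor_triangle :: "'a set \<Rightarrow> ('a \<Rightarrow> 'a \<Rightarrow> bool) \<Rightarrow> 'a set \<Rightarrow> 'a set \<Rightarrow> bool" where
  "anchor_triangle V E X P \<longleftrightarrow> component E (V - X) P \<and>
     (\<exists>p1 p2 p3 x1 x2 x3. P = {p1, p2, p3} \<and> distinct [p1, p2, p3] \<and>
        x1 \<in> X \<and> x2 \<in> X \<and> x3 \<in> X \<and>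
        nbh V E {p1} = {p2, p3, x1} \<and> nbh V E {p2} = {p1, p3, x2} \<and>
        nbh V E {p3} = {p1, p2, x3})"

definition nonredundant_anchor_triangle :: "'a set \<Rightarrow> ('a \<Rightarrow> 'a \<Rightarrow> bool) \<Rightarrow> 'a set \<Rightarrow> 'a set \<Rightarrow> bool" where
  "nonredundant_anchor_triangle V E X P \<longleftrightarrow> anchor_triangle V E X P \<and>
     (\<forall>P'. anchor_triangle V E X P' \<and> P' \<noteq> P \<longrightarrow> nbh V E P' \<noteq> nbh V E P)"

end

theory Submission
  imports Defs
begin

text \<open>Deleting \<open>P\<close> loses at most \<open>\<alpha>(P)\<close>, so only the converse needs work. Let \<open>W = F - P\<close> and
  choose an independent \<open>S \<subseteq> X\<close> maximising \<open>|S| + \<alpha>(W - N(S))\<close>, of least size among the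
  maximisers. If \<open>N(S)\<close> lowered \<open>\<alpha>(P)\<close>, a Helly-type property of the independence number of a
  graph with at most one cycle (two deleted vertices suffice in bipartite graphs, by the lattice of
  maximum independent sets, and three if deleting one edge makes it bipartite) would give at most
  three vertices of \<open>S\<close> with positive conflict on \<open>P\<close>. They form no chunk, so by the hypotheses they are the
  neighbourhood of an anchor triangle \<open>Q \<noteq> P\<close>; a vertex of \<open>Q\<close> whose only neighbour outside
  \<open>Q\<close> is \<open>u\<close> shows that \<open>S - {u}\<close> is as good as \<open>S\<close>, against minimality. So \<open>S\<close>, a
  maximum independent set of \<open>W - N(S)\<close> and one of \<open>P\<close> together beat any independent set of
  \<open>G - P\<close> by \<open>\<alpha>(P)\<close>.\<close>

lemma indep_subset: "indep E I \<Longrightarrow> J \<subseteq> I \<Longrightarrow> indep E J"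
  unfolding indep_def by blast

lemma finite_indep_cards: "finite S \<Longrightarrow> finite {card I | I. I \<subseteq> S \<and> indep E I}"
  by (rule finite_subset[of _ "card ` Pow S"]) auto

lemma card_le_alpha: "finite S \<Longrightarrow> I \<subseteq> S \<Longrightarrow> indep E I \<Longrightarrow> card I \<le> alpha E S"
  unfolding alpha_def by (rule Max_ge) (auto intro: finite_indep_cards)

lemma alpha_witness:
  assumes "finite S" obtains I where "I \<subseteq> S" "indep E I" "card I = alpha E S"
proof -
  have "card {} \<in> {card I | I. I \<subseteq> S \<and> indep E I}"
    by (auto simp: indep_def intro!: exI[of _ "{}"])
  then have ne: "{card I | I. I \<subseteq> S \<and> indep E I} \<noteq> {}" by blast
  have "alpha E S \<in> {card I | I. I \<subseteq> S \<and> indep E I}"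
    unfolding alpha_def using finite_indep_cards[OF assms] ne by (rule Max_in)
  then obtain I where "I \<subseteq> S" "indep E I" "card I = alpha E S" by auto
  then show ?thesis by (rule that)
qed

lemma alpha_mono:
  assumes "finite T" "S \<subseteq> T" shows "alpha E S \<le> alpha E T"
proof -
  obtain I where "I \<subseteq> S" "indep E I" "card I = alpha E S"
    using alpha_witness[OF finite_subset[OF assms(2,1)]] .
  then show ?thesis using card_le_alpha[OF assms(1), of I E] assms(2) by simp
qed

definition max_indep :: "('a \<Rightarrow> 'a \<Rightarrow> bool) \<Rightarrow> 'a set \<Rightarrow> 'a set \<Rightarrow> bool" where
  "max_indep E S M \<longleftrightarrow> M \<subseteq> S \<and> indep E M \<and> card M = alpha E S"

lemma max_indepI: "finite S \<Longrightarrow> M \<subseteq> S \<Longrightarrow> indep E M \<Longrightarrow> alpha E S \<le> card M \<Longrightarrow> max_indep E S M"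
  unfolding max_indep_def using card_le_alpha[of S M E] by simp

lemma ex_max_indep:
  assumes "finite S" obtains M where "max_indep E S M"
proof -
  obtain M where "M \<subseteq> S" "indep E M" "card M = alpha E S" using alpha_witness[OF assms] .
  then show thesis by (intro that) (simp add: max_indep_def)
qed

lemma alpha_Diff_less_iff:
  assumes "finite S"
  shows "alpha E (S - D) < alpha E S \<longleftrightarrow> (\<forall>M. max_indep E S M \<longrightarrow> M \<inter> D \<noteq> {})"
proof
  assume "alpha E (S - D) < alpha E S" (is ?lhs)
  then show "\<forall>M. max_indep E S M \<longrightarrow> M \<inter> D \<noteq> {}"
  proof (intro allI impI notI)
    fix M assume "max_indep E S M" "M \<inter> D = {}"
    then have "M \<subseteq> S - D" "indep E M" "card M = alpha E S"
      unfolding max_indep_def by auto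
    then show False using card_le_alpha[of "S - D" M E] assms \<open>?lhs\<close> by simp
  qed
next
  assume none: "\<forall>M. max_indep E S M \<longrightarrow> M \<inter> D \<noteq> {}"
  obtain M where M: "M \<subseteq> S - D" "indep E M" "card M = alpha E (S - D)"
    using alpha_witness[of "S - D"] assms by blast
  then have "\<not> alpha E S \<le> card M"
    using none max_indepI[OF assms] by blast
  then show "alpha E (S - D) < alpha E S" using M by linarith
qed

section \<open>Bipartite graphs\<close>

definition bipartition :: "('a \<Rightarrow> 'a \<Rightarrow> bool) \<Rightarrow> 'a set \<Rightarrow> 'a set \<Rightarrow> bool" where
  "bipartition E S A \<longleftrightarrow> (\<forall>x\<in>S. \<forall>y\<in>S. E x y \<longrightarrow> (x \<in> A \<longleftrightarrow> y \<notin> A))"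

lemma bipartition_subset: "bipartition E S A \<Longrightarrow> T \<subseteq> S \<Longrightarrow> bipartition E T A"
  unfolding bipartition_def by blast

lemma bipartition_Compl: "bipartition E S A \<Longrightarrow> bipartition E S (- A)"
  unfolding bipartition_def by auto

text \<open>For a bipartition with sides \<open>A\<close> and \<open>-A\<close>, \<open>meet_set A\<close> and \<open>meet_set (-A)\<close> are
  the meet and join of the lattice of maximum independent sets.\<close>

definition meet_set :: "'a set \<Rightarrow> 'a set \<Rightarrow> 'a set \<Rightarrow> 'a set" where
  "meet_set A N N' = (N \<inter> N' \<inter> A) \<union> ((N \<union> N') - A)"

lemma card_meet_set_Compl:
  assumes "finite N" "finite N'"
  shows "card (meet_set A N N') + card (meet_set (- A) N N') = card N + card N'"
proof -
  have "meet_set A N N' \<union> meet_set (- A) N N' = N \<union> N'"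
    "meet_set A N N' \<inter> meet_set (- A) N N' = N \<inter> N'"
    unfolding meet_set_def by auto
  moreover have "finite (meet_set A N N')" "finite (meet_set (- A) N N')"
    using assms unfolding meet_set_def by auto
  ultimately show ?thesis using card_Un_Int assms by metis
qed

lemma meet_set_subset: "N \<subseteq> S \<Longrightarrow> N' \<subseteq> S \<Longrightarrow> meet_set A N N' \<subseteq> S"
  unfolding meet_set_def by auto

lemma indep_meet_set:
  assumes "bipartition E S A" "N \<subseteq> S" "N' \<subseteq> S" "indep E N" "indep E N'"
  shows "indep E (meet_set A N N')"
  using assms unfolding indep_def bipartition_def meet_set_def
  by (metis DiffE Int_iff Un_iff subsetD)

lemma max_indep_meet_set:
  assumes "finite S" "bipartition E S A" "max_indep E S N" "max_indep E S N'"
  shows "max_indep E S (meet_set A N N')"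
proof -
  have N: "N \<subseteq> S" "N' \<subseteq> S" "indep E N" "indep E N'" "card N = alpha E S" "card N' = alpha E S"
    using assms(3,4) unfolding max_indep_def by auto
  have "bipartition E S (- A)" using assms(2) by (rule bipartition_Compl)
  then have "card (meet_set (- A) N N') \<le> alpha E S"
    using card_le_alpha[OF assms(1) meet_set_subset indep_meet_set] N(1-4) by blast
  moreover have "finite N" "finite N'" using N(1,2) assms(1) finite_subset by auto
  ultimately have "alpha E S \<le> card (meet_set A N N')"
    using card_meet_set_Compl[of N N' A] N(5,6) by linarith
  then show ?thesis
    using max_indepI[OF assms(1) meet_set_subset indep_meet_set[OF assms(2)]] N(1-4) by blast
qed

lemma max_indep_avoiding_side:
  assumes "finite S" "bipartition E S A" "finite T" "T \<subseteq> A"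
    and base: "\<exists>N. max_indep E S N \<and> N \<inter> Z = {}"
    and single: "\<forall>a\<in>T. \<exists>N. max_indep E S N \<and> N \<inter> insert a Z = {}"
  shows "\<exists>N. max_indep E S N \<and> N \<inter> (T \<union> Z) = {}"
  using assms(3,4) single
proof (induction T rule: finite_induct)
  case empty
  then show ?case using base by simp
next
  case (insert a T)
  then obtain N N' where N: "max_indep E S N" "N \<inter> (T \<union> Z) = {}"
    and N': "max_indep E S N'" "N' \<inter> insert a Z = {}"
    by auto
  have "meet_set A N N' \<inter> (insert a T \<union> Z) = {}"
    using N(2) N'(2) insert.prems unfolding meet_set_def by auto
  then show ?case using max_indep_meet_set[OF assms(1,2) N(1) N'(1)] by blast
qed

text \<open>If no such \<open>Q\<close> existed, every pair of vertices of \<open>D\<close> would be avoided by some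
  maximum independent set; meets, first on side \<open>A\<close> and then on side \<open>-A\<close>, would combine these
  into one avoiding all of \<open>D\<close>.\<close>

lemma alpha_Diff_less_two_bipartite:
  assumes "finite S" "bipartition E S A" "alpha E (S - D) < alpha E S"
  obtains Q where "Q \<subseteq> D" "finite Q" "card Q \<le> 2" "alpha E (S - Q) < alpha E S"
proof (rule ccontr)
  assume "\<not> thesis"
  note witness = that
  have pairs: "\<exists>N. max_indep E S N \<and> N \<inter> Q = {}" if "Q \<subseteq> D" "finite Q" "card Q \<le> 2" for Q
  proof -
    have "\<not> alpha E (S - Q) < alpha E S" using \<open>\<not> thesis\<close> witness that by blast
    then show ?thesis using alpha_Diff_less_iff[OF assms(1), of E Q] by auto
  qed
  have side_A: "\<exists>N. max_indep E S N \<and> N \<inter> (D \<inter> S \<inter> A \<union> Z) = {}"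
    if "Z \<subseteq> D" "finite Z" "card Z \<le> 1" for Z
  proof (rule max_indep_avoiding_side[OF assms(1,2)])
    show "\<exists>N. max_indep E S N \<and> N \<inter> Z = {}" using pairs that by simp
    show "\<forall>a\<in>D \<inter> S \<inter> A. \<exists>N. max_indep E S N \<and> N \<inter> insert a Z = {}"
    proof
      fix a assume "a \<in> D \<inter> S \<inter> A"
      then have "insert a Z \<subseteq> D" "finite (insert a Z)" "card (insert a Z) \<le> 2"
        using that by (auto simp: card_insert_if)
      then show "\<exists>N. max_indep E S N \<and> N \<inter> insert a Z = {}" by (rule pairs)
    qed
  qed (use assms(1) in auto)
  have "\<exists>N. max_indep E S N \<and> N \<inter> ((D \<inter> S - A) \<union> (D \<inter> S \<inter> A)) = {}"
  proof (rule max_indep_avoiding_side[OF assms(1) bipartition_Compl[OF assms(2)]])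
    show "\<exists>N. max_indep E S N \<and> N \<inter> (D \<inter> S \<inter> A) = {}" using side_A[of "{}"] by simp
    show "\<forall>a\<in>D \<inter> S - A. \<exists>N. max_indep E S N \<and> N \<inter> insert a (D \<inter> S \<inter> A) = {}"
      using side_A[of "{a}" for a] by (simp add: Un_commute)
  qed (use assms(1) in auto)
  then obtain N where "max_indep E S N" "N \<inter> D = {}"
    unfolding max_indep_def by auto
  then show False using assms(3) alpha_Diff_less_iff[OF assms(1)] by blast
qed

section \<open>Forests are bipartite\<close>

definition simple_path :: "('a \<Rightarrow> 'a \<Rightarrow> bool) \<Rightarrow> 'a set \<Rightarrow> 'a list \<Rightarrow> bool" where
  "simple_path E S xs \<longleftrightarrow> xs \<noteq> [] \<and> distinct xs \<and> set xs \<subseteq> S \<and>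
     (\<forall>i. Suc i < length xs \<longrightarrow> E (xs ! i) (xs ! Suc i))"

lemma simple_path_length_le: "finite S \<Longrightarrow> simple_path E S xs \<Longrightarrow> length xs \<le> card S"
  unfolding simple_path_def by (metis card_mono distinct_card)

lemma simple_path_Cons:
  assumes "simple_path E S xs" "w \<in> S" "w \<notin> set xs" "E w (hd xs)"
  shows "simple_path E S (w # xs)"
  using assms unfolding simple_path_def
  by (auto simp: nth_Cons hd_conv_nth split: nat.split)

lemma is_cycle_take_simple_path:
  assumes "simple_path E S xs" "j < length xs" "2 \<le> j" "E (xs ! j) (xs ! 0)"
  shows "is_cycle E S (take (Suc j) xs)"
  unfolding is_cycle_def
proof (intro conjI allI impI)
  let ?cs = "take (Suc j) xs"
  have len: "length ?cs = Suc j" using assms(2) by simp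
  show "3 \<le> length ?cs" "distinct ?cs" "set ?cs \<subseteq> S"
    using assms(1,3) len unfolding simple_path_def by (auto dest: in_set_takeD)
  fix i assume "i < length ?cs"
  then consider "i = j" | "i < j" using len by linarith
  then show "E (?cs ! i) (?cs ! ((i + 1) mod length ?cs))"
  proof cases
    case 1
    then show ?thesis using assms(4) len by simp
  next
    case 2
    then have "(i + 1) mod length ?cs = Suc i" using len by simp
    then show ?thesis using 2 assms(1,2) unfolding simple_path_def by simp
  qed
qed

lemma is_cycle_mono: "is_cycle E S cs \<Longrightarrow> S \<subseteq> T \<Longrightarrow> is_cycle E T cs"
  unfolding is_cycle_def by auto

text \<open>The first vertex of a longest path is a leaf: a second neighbour would either extend the path
  or close a cycle with it.\<close>

lemma acyclic_ex_leaf: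
  assumes "finite S" "S \<noteq> {}" "\<forall>x y. E x y \<longrightarrow> E y x" "\<forall>x. \<not> E x x"
    and acyclic: "\<nexists>cs. is_cycle E S cs"
  obtains v where "v \<in> S" "\<forall>y\<in>S. \<forall>z\<in>S. E v y \<longrightarrow> E v z \<longrightarrow> y = z"
proof -
  obtain v0 where "v0 \<in> S" using assms(2) by blast
  then have "simple_path E S [v0]" unfolding simple_path_def by simp
  moreover have "\<forall>ys. simple_path E S ys \<longrightarrow> length ys < Suc (card S)"
    using simple_path_length_le[OF assms(1)] by (simp add: less_Suc_eq_le)
  ultimately obtain xs where xs: "simple_path E S xs"
    and longest: "\<forall>ys. simple_path E S ys \<longrightarrow> length ys \<le> length xs"
    using Lattices_Big.ex_has_greatest_nat[of "simple_path E S" _ length] by blast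
  then obtain v ys where v: "xs = v # ys" unfolding simple_path_def by (cases xs) auto
  have "v \<in> S" using xs v unfolding simple_path_def by simp
  moreover have "y = z" if yz: "y \<in> S" "z \<in> S" "E v y" "E v z" for y z
  proof (rule ccontr)
    assume "y \<noteq> z"
    then obtain w where w: "w \<in> S" "E v w" "ys = [] \<or> w \<noteq> hd ys" using yz by metis
    show False
    proof (cases "w \<in> set xs")
      case False
      then have "simple_path E S (w # xs)"
        using simple_path_Cons[OF xs w(1)] w(2) assms(3) v by simp
      then show False using longest by fastforce
    next
      case True
      then obtain j where j: "j < length xs" "xs ! j = w" by (metis in_set_conv_nth)
      have "j \<noteq> 0" using j w(2) assms(4) v by (metis nth_Cons_0)
      moreover have "j \<noteq> 1" using j w(3) v by (cases ys) auto
      ultimately have "is_cycle E S (take (Suc j) xs)"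
        using is_cycle_take_simple_path[OF xs j(1)] j(2) w(2) assms(3) v by simp
      then show False using acyclic by blast
    qed
  qed
  ultimately show ?thesis using that by blast
qed

text \<open>The leaf goes on the side opposite to its unique neighbour.\<close>

lemma bipartition_insert_leaf:
  assumes sym: "\<forall>x y. E x y \<longrightarrow> E y x" and irr: "\<forall>x. \<not> E x x"
    and A: "bipartition E (S - {v}) A" and leaf: "\<forall>y\<in>S. \<forall>z\<in>S. E v y \<longrightarrow> E v z \<longrightarrow> y = z"
  obtains A' where "bipartition E S A'"
proof -
  define A' where "A' = (if \<exists>w\<in>S. E v w \<and> w \<notin> A then insert v A else A - {v})"
  have off_v: "x \<in> A' \<longleftrightarrow> x \<in> A" if "x \<noteq> v" for x
    using that unfolding A'_def by auto
  have at_v: "v \<in> A' \<longleftrightarrow> y \<notin> A'" if "y \<in> S" "E v y" for y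
  proof -
    have "y \<noteq> v" using that irr by blast
    have unique: "w = y" if "w \<in> S" "E v w" for w
      using leaf that \<open>y \<in> S\<close> \<open>E v y\<close> by blast
    show ?thesis
    proof (cases "y \<in> A")
      case True
      then have "\<not> (\<exists>w\<in>S. E v w \<and> w \<notin> A)" using unique by blast
      then show ?thesis using True off_v[OF \<open>y \<noteq> v\<close>] unfolding A'_def by simp
    next
      case False
      then have "\<exists>w\<in>S. E v w \<and> w \<notin> A" using that by blast
      then show ?thesis using False off_v[OF \<open>y \<noteq> v\<close>] unfolding A'_def by simp
    qed
  qed
  have "bipartition E S A'"
    unfolding bipartition_def
  proof (intro ballI impI)
    fix x y assume "x \<in> S" "y \<in> S" "E x y"
    moreover have "E y x" using \<open>E x y\<close> sym by blast
    ultimately consider "x = v" | "y = v" | "x \<noteq> v" "y \<noteq> v" by blast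
    then show "x \<in> A' \<longleftrightarrow> y \<notin> A'"
    proof cases
      case 1
      then show ?thesis using at_v \<open>y \<in> S\<close> \<open>E x y\<close> by blast
    next
      case 2
      then show ?thesis using at_v \<open>x \<in> S\<close> \<open>E y x\<close> by blast
    next
      case 3
      then show ?thesis
        using A \<open>x \<in> S\<close> \<open>y \<in> S\<close> \<open>E x y\<close> off_v unfolding bipartition_def by simp
    qed
  qed
  then show ?thesis by (rule that)
qed

lemma acyclic_bipartition:
  assumes "finite S" "\<forall>x y. E x y \<longrightarrow> E y x" "\<forall>x. \<not> E x x" "\<nexists>cs. is_cycle E S cs"
  obtains A where "bipartition E S A"
proof -
  have "\<exists>A. bipartition E S A"
    using assms(1,4)
  proof (induction S rule: finite_psubset_induct)
    case (psubset S)
    show ?case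
    proof (cases "S = {}")
      case True
      then show ?thesis unfolding bipartition_def by simp
    next
      case False
      then obtain v where v: "v \<in> S" "\<forall>y\<in>S. \<forall>z\<in>S. E v y \<longrightarrow> E v z \<longrightarrow> y = z"
        using acyclic_ex_leaf[OF psubset.hyps False assms(2,3) psubset.prems] by blast
      have "\<nexists>cs. is_cycle E (S - {v}) cs"
        using psubset.prems is_cycle_mono[of E "S - {v}" _ S] by blast
      then obtain A where "bipartition E (S - {v}) A"
        using psubset.IH[of "S - {v}"] v(1) by blast
      then obtain A' where "bipartition E S A'"
        by (rule bipartition_insert_leaf[OF assms(2,3) _ v(2)])
      then show ?thesis by blast
    qed
  qed
  then show ?thesis using that by blast
qed

section \<open>Graphs with at most one cycle\<close>

definition remove_edge :: "('a \<Rightarrow> 'a \<Rightarrow> bool) \<Rightarrow> 'a \<Rightarrow> 'a \<Rightarrow> 'a \<Rightarrow> 'a \<Rightarrow> bool" where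
  "remove_edge E a b = (\<lambda>x y. E x y \<and> {x, y} \<noteq> {a, b})"

locale edge_removal =
  fixes E :: "'a \<Rightarrow> 'a \<Rightarrow> bool" and c1 c2 :: 'a
  assumes edge: "E c1 c2"
begin

abbreviation E' :: "'a \<Rightarrow> 'a \<Rightarrow> bool" where
  "E' \<equiv> remove_edge E c1 c2"

lemma indep_remove_edge: "indep E M \<Longrightarrow> indep E' M"
  unfolding indep_def remove_edge_def by blast

lemma not_both_ends: "indep E M \<Longrightarrow> \<not> (c1 \<in> M \<and> c2 \<in> M)"
  unfolding indep_def using edge by blast

lemma indep_of_remove_edge: "indep E' M \<Longrightarrow> \<not> (c1 \<in> M \<and> c2 \<in> M) \<Longrightarrow> indep E M"
  unfolding indep_def remove_edge_def by (metis doubleton_eq_iff)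

lemma indep_of_remove_edge_Diff: "indep E' M \<Longrightarrow> c = c1 \<or> c = c2 \<Longrightarrow> indep E (M - {c})"
  using indep_of_remove_edge indep_subset[of E' M "M - {c}"] by blast

lemma alpha_le_alpha_remove_edge:
  assumes "finite T" shows "alpha E T \<le> alpha E' T"
proof -
  obtain I where I: "I \<subseteq> T" "indep E I" "card I = alpha E T" using alpha_witness[OF assms] .
  show ?thesis using card_le_alpha[OF assms I(1) indep_remove_edge[OF I(2)]] I(3) by simp
qed

lemma alpha_remove_edge_le_Suc:
  assumes "finite T" shows "alpha E' T \<le> Suc (alpha E T)"
proof -
  obtain I where I: "I \<subseteq> T" "indep E' I" "card I = alpha E' T" using alpha_witness[OF assms] .
  have "card (I - {c1}) \<le> alpha E T"
    using card_le_alpha[OF assms _ indep_of_remove_edge_Diff[OF I(2)]] I(1) by blast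
  moreover have "card I \<le> Suc (card (I - {c1}))"
    using finite_subset[OF I(1) assms] by (cases "c1 \<in> I") (auto simp: card_Diff_singleton)
  ultimately show ?thesis using I(3) by linarith
qed

lemma max_indep_remove_edge:
  "finite S \<Longrightarrow> alpha E' S = alpha E S \<Longrightarrow> max_indep E S M \<Longrightarrow> max_indep E' S M"
  unfolding max_indep_def using indep_remove_edge by simp

lemma alpha_Diff_less_of_remove_edge:
  assumes "finite S" "alpha E' S = alpha E S" "alpha E' (S - Q) < alpha E' S"
  shows "alpha E (S - Q) < alpha E S"
  using alpha_le_alpha_remove_edge[of "S - Q"] assms by simp

lemma bipartition_of_remove_edge:
  assumes "bipartition E' S A" "c1 \<in> A \<longleftrightarrow> c2 \<notin> A" "\<forall>x y. E x y \<longrightarrow> E y x"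
  shows "bipartition E S A"
  unfolding bipartition_def
proof (intro ballI impI)
  fix x y assume "x \<in> S" "y \<in> S" "E x y"
  then show "x \<in> A \<longleftrightarrow> y \<notin> A"
    using assms unfolding bipartition_def remove_edge_def doubleton_eq_iff by blast
qed

text \<open>A maximum independent set of \<open>E\<close> avoiding \<open>Q\<^sub>1 - {c\<^sub>1}\<close> and \<open>Q\<^sub>2 - {c\<^sub>2}\<close>
  would have to contain both ends of the removed edge.\<close>

lemma alpha_Diff_less_Un_ends:
  assumes "finite S" "alpha E' S = alpha E S"
    and "alpha E' (S - Q1) < alpha E' S" "alpha E' (S - Q2) < alpha E' S"
  shows "alpha E (S - ((Q1 - {c1}) \<union> (Q2 - {c2}))) < alpha E S"
  unfolding alpha_Diff_less_iff[OF assms(1)]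
proof (intro allI impI notI)
  fix N assume N: "max_indep E S N" "N \<inter> ((Q1 - {c1}) \<union> (Q2 - {c2})) = {}"
  then have "max_indep E' S N" using max_indep_remove_edge assms(1,2) by blast
  moreover note assms(3,4)[unfolded alpha_Diff_less_iff[OF assms(1)]]
  ultimately have "N \<inter> Q1 \<noteq> {}" "N \<inter> Q2 \<noteq> {}" by simp_all
  then have "c1 \<in> N" "c2 \<in> N" using N(2) by blast+
  then show False using not_both_ends N(1) unfolding max_indep_def by blast
qed

lemma alpha_remove_edge_Diff_insert_end_less:
  assumes fin: "finite S" and eq: "alpha E' S = alpha E S" and less: "alpha E (S - D) < alpha E S"
    and c: "c = c1 \<or> c = c2"
  shows "alpha E' (S - insert c D) < alpha E' S"
proof -
  obtain I where I: "I \<subseteq> S - insert c D" "indep E' I" "card I = alpha E' (S - insert c D)"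
    using alpha_witness[of "S - insert c D"] fin by blast
  then have "I - {c} = I" by blast
  then have "indep E I" using indep_of_remove_edge_Diff[OF I(2) c] by simp
  moreover have "I \<subseteq> S - D" using I(1) by blast
  ultimately have "alpha E' (S - insert c D) \<le> alpha E (S - D)"
    using card_le_alpha[of "S - D" I E] I(3) fin by simp
  then show ?thesis using less eq by linarith
qed

lemma alpha_Diff_less_two_if_alpha_eq:
  assumes fin: "finite S" and bip: "bipartition E' S A" and eq: "alpha E' S = alpha E S"
    and less: "alpha E (S - D) < alpha E S"
  obtains Q where "Q \<subseteq> D" "finite Q" "card Q \<le> 2" "alpha E (S - Q) < alpha E S"
proof -
  note end_removed = alpha_remove_edge_Diff_insert_end_less[OF fin eq less]
  obtain Q1 where Q1: "Q1 \<subseteq> insert c1 D" "finite Q1" "card Q1 \<le> 2" "alpha E' (S - Q1) < alpha E' S"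
    using alpha_Diff_less_two_bipartite[OF fin bip end_removed] by blast
  obtain Q2 where Q2: "Q2 \<subseteq> insert c2 D" "finite Q2" "card Q2 \<le> 2" "alpha E' (S - Q2) < alpha E' S"
    using alpha_Diff_less_two_bipartite[OF fin bip end_removed] by blast
  consider "c1 \<notin> Q1" | "c2 \<notin> Q2" | "c1 \<in> Q1" "c2 \<in> Q2" by blast
  then show ?thesis
  proof cases
    case 1
    then show ?thesis using that[of Q1] Q1 alpha_Diff_less_of_remove_edge[OF fin eq] by blast
  next
    case 2
    then show ?thesis using that[of Q2] Q2 alpha_Diff_less_of_remove_edge[OF fin eq] by blast
  next
    case 3
    have "card (Q1 - {c1}) \<le> 1" "card (Q2 - {c2}) \<le> 1"
      using Q1(3) Q2(3) 3 by (simp_all add: card_Diff_singleton)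
    then have "card ((Q1 - {c1}) \<union> (Q2 - {c2})) \<le> 2"
      using card_Un_le[of "Q1 - {c1}" "Q2 - {c2}"] by linarith
    moreover have "(Q1 - {c1}) \<union> (Q2 - {c2}) \<subseteq> D" using Q1(1) Q2(1) by blast
    moreover have "finite ((Q1 - {c1}) \<union> (Q2 - {c2}))" using Q1(2) Q2(2) by blast
    ultimately show ?thesis
      using that alpha_Diff_less_Un_ends[OF fin eq Q1(4) Q2(4)] by blast
  qed
qed

text \<open>The meet of \<open>N\<close> with \<open>M\<^sub>0\<close> contains at most one end of the removed edge, so it is
  independent in \<open>E\<close>; hence their join has at least \<open>\<alpha>(E')\<close> elements, yet avoids \<open>Q\<close>.\<close>

lemma alpha_Diff_less_of_meet:
  assumes fin: "finite P" and bip: "bipartition E' P A" and ends: "c1 \<in> A" "c2 \<in> A"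
    and M0: "max_indep E' P M0" "M0 \<inter> Q \<inter> A = {}"
    and less': "alpha E' (P - Q) < alpha E' P"
  shows "alpha E (P - Q) < alpha E P"
  unfolding alpha_Diff_less_iff[OF fin]
proof (intro allI impI notI)
  fix N assume N: "max_indep E P N" "N \<inter> Q = {}"
  have NP: "N \<subseteq> P" "indep E N" "card N = alpha E P"
    and M0P: "M0 \<subseteq> P" "indep E' M0" "card M0 = alpha E' P"
    using N(1) M0(1) unfolding max_indep_def by auto
  note indep_meet = indep_meet_set[OF _ NP(1) M0P(1) indep_remove_edge[OF NP(2)] M0P(2)]
  have "\<not> (c1 \<in> meet_set A N M0 \<and> c2 \<in> meet_set A N M0)"
    using not_both_ends[OF NP(2)] ends unfolding meet_set_def by blast
  then have "indep E (meet_set A N M0)"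
    using indep_of_remove_edge indep_meet[OF bip] by blast
  then have "card (meet_set A N M0) \<le> alpha E P"
    using card_le_alpha[OF fin meet_set_subset[OF NP(1) M0P(1)]] by blast
  moreover have "finite N" "finite M0" using NP(1) M0P(1) fin finite_subset by auto
  ultimately have "alpha E' P \<le> card (meet_set (- A) N M0)"
    using card_meet_set_Compl[of N M0 A] NP(3) M0P(3) by linarith
  moreover have "meet_set (- A) N M0 \<subseteq> P - Q"
    using NP(1) M0P(1) N(2) M0(2) unfolding meet_set_def by auto
  then have "card (meet_set (- A) N M0) \<le> alpha E' (P - Q)"
    using card_le_alpha[of "P - Q" _ E'] fin indep_meet[OF bipartition_Compl[OF bip]] by simp
  ultimately have "alpha E' P \<le> alpha E' (P - Q)" by linarith
  then show False using less' by linarith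
qed

text \<open>Either \<open>a\<close> lowers \<open>\<alpha>(E)\<close> by itself, or \<open>\<alpha>(E') = \<alpha>(E)\<close> on \<open>P - {a}\<close>.\<close>

lemma alpha_Diff_less_three_of_critical_vertex:
  assumes fin: "finite P" and bip: "bipartition E' P A" and gap: "alpha E' P = Suc (alpha E P)"
    and less: "alpha E (P - D) < alpha E P" and a: "a \<in> D" "alpha E' (P - {a}) < alpha E' P"
  obtains Q where "Q \<subseteq> D" "finite Q" "card Q \<le> 3" "alpha E (P - Q) < alpha E P"
proof (cases "alpha E (P - {a}) < alpha E P")
  case True
  then show ?thesis using that[of "{a}"] a(1) by simp
next
  case False
  then have eq: "alpha E (P - {a}) = alpha E P" using alpha_mono[OF fin, of "P - {a}" E] by simp
  then have eq': "alpha E' (P - {a}) = alpha E (P - {a})"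
    using alpha_le_alpha_remove_edge[of "P - {a}"] fin a(2) gap by simp
  have "alpha E (P - {a} - D) \<le> alpha E (P - D)" by (rule alpha_mono) (use fin in auto)
  then have "alpha E (P - {a} - D) < alpha E (P - {a})" using eq less by linarith
  then obtain Q0 where Q0: "Q0 \<subseteq> D" "finite Q0" "card Q0 \<le> 2"
    "alpha E (P - {a} - Q0) < alpha E (P - {a})"
    using alpha_Diff_less_two_if_alpha_eq[OF _ bipartition_subset[OF bip] eq'] fin by blast
  have "P - insert a Q0 = P - {a} - Q0" by blast
  moreover have "card (insert a Q0) \<le> 3" using Q0(2,3) by (simp add: card_insert_if)
  ultimately show ?thesis using that[of "insert a Q0"] Q0 a(1) eq by simp
qed

lemma alpha_Diff_less_three_if_alpha_gap:
  assumes fin: "finite P" and bip: "bipartition E' P A" and ends: "c1 \<in> A" "c2 \<in> A"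
    and gap: "alpha E' P = Suc (alpha E P)" and less: "alpha E (P - D) < alpha E P"
  obtains Q where "Q \<subseteq> D" "finite Q" "card Q \<le> 3" "alpha E (P - Q) < alpha E P"
proof -
  have "alpha E' (P - D) < alpha E' P"
    using alpha_remove_edge_le_Suc[of "P - D"] fin gap less by simp
  then obtain Q where Q: "Q \<subseteq> D" "finite Q" "card Q \<le> 2" "alpha E' (P - Q) < alpha E' P"
    using alpha_Diff_less_two_bipartite[OF fin bip] by blast
  show ?thesis
  proof (cases "\<exists>a\<in>Q \<inter> A. alpha E' (P - {a}) < alpha E' P")
    case True
    then obtain a where "a \<in> D" "alpha E' (P - {a}) < alpha E' P" using Q(1) by blast
    then show ?thesis
      using alpha_Diff_less_three_of_critical_vertex[OF fin bip gap less] that by blast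
  next
    case False
    have "\<exists>M. max_indep E' P M \<and> M \<inter> (Q \<inter> A \<union> {}) = {}"
    proof (rule max_indep_avoiding_side[OF fin bip])
      show "\<exists>M. max_indep E' P M \<and> M \<inter> {} = {}" using ex_max_indep[OF fin] by blast
      show "\<forall>a\<in>Q \<inter> A. \<exists>M. max_indep E' P M \<and> M \<inter> insert a {} = {}"
        using False alpha_Diff_less_iff[OF fin, of E' "{_}"] by auto
    qed (use Q(2) in auto)
    then obtain M0 where "max_indep E' P M0" "M0 \<inter> Q \<inter> A = {}" by auto
    then have "alpha E (P - Q) < alpha E P"
      using alpha_Diff_less_of_meet[OF fin bip ends] Q(4) by blast
    then show ?thesis using that[of Q] Q(1-3) by simp
  qed
qed

text \<open>If the bipartition separates \<open>c\<^sub>1\<close> and \<open>c\<^sub>2\<close>, it is one of \<open>E\<close>; otherwise \<open>\<alpha>\<close>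
  either stays the same or grows by one when the edge is removed.\<close>

lemma alpha_Diff_less_three_of_bipartition_remove_edge:
  assumes fin: "finite P" and sym: "\<forall>x y. E x y \<longrightarrow> E y x" and A: "bipartition E' P A"
    and less: "alpha E (P - D) < alpha E P"
  obtains Q where "Q \<subseteq> D" "finite Q" "card Q \<le> 3" "alpha E (P - Q) < alpha E P"
proof (cases "c1 \<in> A \<longleftrightarrow> c2 \<notin> A")
  case True
  then have "bipartition E P A" using bipartition_of_remove_edge[OF A _ sym] by blast
  then obtain Q where "Q \<subseteq> D" "finite Q" "card Q \<le> 2" "alpha E (P - Q) < alpha E P"
    using alpha_Diff_less_two_bipartite[OF fin _ less] by blast
  then show ?thesis using that[of Q] by simp
next
  case False
  define A' where "A' = (if c1 \<in> A then A else - A)"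
  have A': "bipartition E' P A'" "c1 \<in> A'" "c2 \<in> A'"
    using A bipartition_Compl[OF A] False unfolding A'_def by auto
  consider "alpha E' P = alpha E P" | "alpha E' P = Suc (alpha E P)"
    using alpha_le_alpha_remove_edge[OF fin] alpha_remove_edge_le_Suc[OF fin] by linarith
  then show ?thesis
  proof cases
    case 1
    then obtain Q where "Q \<subseteq> D" "finite Q" "card Q \<le> 2" "alpha E (P - Q) < alpha E P"
      using alpha_Diff_less_two_if_alpha_eq[OF fin A'(1) _ less] by blast
    then show ?thesis using that[of Q] by simp
  next
    case 2
    then show ?thesis using alpha_Diff_less_three_if_alpha_gap[OF fin A' _ less] that by blast
  qed
qed

end

lemma acyclic_remove_edge_of_unique_cycle:
  assumes cs: "is_cycle E P cs"
    and unique: "\<forall>cs cs'. is_cycle E P cs \<and> is_cycle E P cs' \<longrightarrow> cycle_edges cs = cycle_edges cs'"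
  shows "\<nexists>cs'. is_cycle (remove_edge E (cs ! 0) (cs ! 1)) P cs'"
proof
  assume "\<exists>cs'. is_cycle (remove_edge E (cs ! 0) (cs ! 1)) P cs'"
  then obtain cs' where cs': "is_cycle (remove_edge E (cs ! 0) (cs ! 1)) P cs'" by blast
  then have "is_cycle E P cs'" unfolding is_cycle_def remove_edge_def by auto
  then have same: "cycle_edges cs' = cycle_edges cs" using unique cs by blast
  have "3 \<le> length cs" using cs unfolding is_cycle_def by blast
  then have "(0 + 1) mod length cs = 1" "0 < length cs" by auto
  then have "{cs ! 0, cs ! 1} \<in> cycle_edges cs"
    unfolding cycle_edges_def by (intro CollectI exI[of _ 0]) simp
  then have "{cs ! 0, cs ! 1} \<in> cycle_edges cs'" using same by simp
  then obtain i where "i < length cs'"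
    "{cs ! 0, cs ! 1} = {cs' ! i, cs' ! ((i + 1) mod length cs')}"
    unfolding cycle_edges_def by auto
  moreover have "remove_edge E (cs ! 0) (cs ! 1) (cs' ! i) (cs' ! ((i + 1) mod length cs'))"
    using cs' \<open>i < length cs'\<close> unfolding is_cycle_def by blast
  ultimately show False unfolding remove_edge_def by simp
qed

text \<open>Removing one cycle edge leaves a forest.\<close>

lemma alpha_Diff_less_three_unicyclic:
  assumes fin: "finite P" and sym: "\<forall>x y. E x y \<longrightarrow> E y x" and irr: "\<forall>x. \<not> E x x"
    and unique: "\<forall>cs cs'. is_cycle E P cs \<and> is_cycle E P cs' \<longrightarrow> cycle_edges cs = cycle_edges cs'"
    and less: "alpha E (P - D) < alpha E P"
  obtains Q where "Q \<subseteq> D" "finite Q" "card Q \<le> 3" "alpha E (P - Q) < alpha E P"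
proof (cases "\<exists>cs. is_cycle E P cs")
  case False
  then obtain A where "bipartition E P A" using acyclic_bipartition[OF fin sym irr] by blast
  then obtain Q where "Q \<subseteq> D" "finite Q" "card Q \<le> 2" "alpha E (P - Q) < alpha E P"
    using alpha_Diff_less_two_bipartite[OF fin _ less] by blast
  then show ?thesis using that[of Q] by simp
next
  case True
  then obtain cs where cs: "is_cycle E P cs" by blast
  then have len: "3 \<le> length cs"
    and edges: "\<forall>i < length cs. E (cs ! i) (cs ! ((i + 1) mod length cs))"
    unfolding is_cycle_def by blast+
  then have "0 < length cs" "(0 + 1) mod length cs = 1" by auto
  then have "E (cs ! 0) (cs ! 1)" using edges by metis
  then interpret edge_removal E "cs ! 0" "cs ! 1" by unfold_locales
  have "\<forall>x y. E' x y \<longrightarrow> E' y x" "\<forall>x. \<not> E' x x"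
    using sym irr unfolding remove_edge_def by (auto simp: insert_commute)
  then obtain A where "bipartition E' P A"
    using acyclic_bipartition[OF fin _ _ acyclic_remove_edge_of_unique_cycle[OF cs unique]] by blast
  then show ?thesis
    using alpha_Diff_less_three_of_bipartition_remove_edge[OF fin sym _ less] that by blast
qed

lemma graphD:
  assumes "graph V E"
  shows "finite V" "E x y \<Longrightarrow> E y x" "\<not> E x x" "E x y \<Longrightarrow> x \<in> V" "E x y \<Longrightarrow> y \<in> V"
  using assms unfolding graph_def by blast+

lemma component_subset: "component E S C \<Longrightarrow> C \<subseteq> S"
proof
  fix y assume "component E S C" "y \<in> C"
  then obtain x where "x \<in> S" and path: "(\<lambda>a b. a \<in> S \<and> b \<in> S \<and> E a b)\<^sup>*\<^sup>* x y"
    unfolding component_def by blast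
  from path show "y \<in> S" by (induction rule: rtranclp_induct) (use \<open>x \<in> S\<close> in auto)
qed

lemma component_closed:
  assumes "component E S C" "y \<in> C" "z \<in> S" "E y z"
  shows "z \<in> C"
  using assms component_subset[OF assms(1)] unfolding component_def
  by (auto intro: rtranclp.rtrancl_into_rtrancl)

lemma component_eq:
  assumes sym: "\<And>x y. E x y \<Longrightarrow> E y x"
    and "component E S C" "component E S C'" "w \<in> C" "w \<in> C'"
  shows "C = C'"
proof -
  let ?R = "\<lambda>a b. a \<in> S \<and> b \<in> S \<and> E a b"
  have "symp ?R" using sym unfolding symp_def by blast
  then have R_sym: "?R\<^sup>*\<^sup>* y x" if "?R\<^sup>*\<^sup>* x y" for x y
    using that by (simp add: symp_rtranclp sympD)
  obtain x x' where C: "C = {y. ?R\<^sup>*\<^sup>* x y}" "C' = {y. ?R\<^sup>*\<^sup>* x' y}"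
    using assms(2,3) unfolding component_def by blast
  with assms(4,5) have w: "?R\<^sup>*\<^sup>* x w" "?R\<^sup>*\<^sup>* x' w" by auto
  have "?R\<^sup>*\<^sup>* x x'" "?R\<^sup>*\<^sup>* x' x"
    using rtranclp_trans[OF w(1) R_sym[OF w(2)]] rtranclp_trans[OF w(2) R_sym[OF w(1)]] .
  then show ?thesis unfolding C by (blast intro: rtranclp_trans)
qed

lemma anchor_triangle_vertex:
  assumes G: "graph V E" and Q: "anchor_triangle V E X Q" and "p \<in> Q"
  obtains x where "x \<in> nbh V E Q" "E p x" "\<forall>y. E p y \<longrightarrow> y \<in> Q \<or> y = x"
proof -
  have "Q \<subseteq> V - X" using Q component_subset unfolding anchor_triangle_def by blast
  moreover obtain x where "x \<in> X" "nbh V E {p} = insert x (Q - {p})"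
  proof -
    obtain p1 p2 p3 x1 x2 x3 where t: "Q = {p1, p2, p3}" "distinct [p1, p2, p3]"
      "x1 \<in> X" "x2 \<in> X" "x3 \<in> X" "nbh V E {p1} = {p2, p3, x1}"
      "nbh V E {p2} = {p1, p3, x2}" "nbh V E {p3} = {p1, p2, x3}"
      using Q unfolding anchor_triangle_def by blast
    from \<open>p \<in> Q\<close> t(1) consider "p = p1" | "p = p2" | "p = p3" by blast
    then show thesis
    proof cases
      case 1
      then have "nbh V E {p} = insert x1 (Q - {p})" using t(1,2,6) by auto
      then show thesis using that t(3) by blast
    next
      case 2
      then have "nbh V E {p} = insert x2 (Q - {p})" using t(1,2,7) by auto
      then show thesis using that t(4) by blast
    next
      case 3
      then have "nbh V E {p} = insert x3 (Q - {p})" using t(1,2,8) by auto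
      then show thesis using that t(5) by blast
    qed
  qed
  ultimately have "x \<notin> Q" "E p x" "\<forall>y. E p y \<longrightarrow> y \<in> Q \<or> y = x"
    using graphD[OF G] unfolding nbh_def by (blast, blast, blast)
  moreover have "x \<in> nbh V E Q"
    using \<open>x \<notin> Q\<close> \<open>E p x\<close> \<open>p \<in> Q\<close> graphD[OF G] unfolding nbh_def by blast
  ultimately show ?thesis using that by blast
qed

lemma anchor_triangle_private_neighbour:
  assumes G: "graph V E" and Q: "anchor_triangle V E X Q" and "u \<in> nbh V E Q"
  obtains p where "p \<in> Q" "E p u" "\<forall>y. E p y \<longrightarrow> y \<in> Q \<or> y = u"
proof -
  obtain p where p: "p \<in> Q" "E p u" "u \<notin> Q" using assms(3) unfolding nbh_def by blast
  obtain x where "\<forall>y. E p y \<longrightarrow> y \<in> Q \<or> y = x"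
    using anchor_triangle_vertex[OF G Q p(1)] by blast
  then have "\<forall>y. E p y \<longrightarrow> y \<in> Q \<or> y = u" using p(2,3) by blast
  then show ?thesis using that p(1,2) by blast
qed

lemma anchor_triangle_subset_nbh:
  assumes G: "graph V E" and Q: "anchor_triangle V E X Q" and "nbh V E Q \<subseteq> S" "Q \<inter> S = {}"
  shows "Q \<subseteq> nbh V E S"
proof
  fix q assume "q \<in> Q"
  then obtain x where "x \<in> nbh V E Q" "E q x" using anchor_triangle_vertex[OF G Q] by blast
  then show "q \<in> nbh V E S"
    using \<open>q \<in> Q\<close> assms(3,4) graphD[OF G] unfolding nbh_def by blast
qed

section \<open>Extending independent subsets of \<open>X\<close>\<close>

lemma indep_Un:
  assumes "indep E A" "indep E B" "\<And>x y. x \<in> A \<Longrightarrow> y \<in> B \<Longrightarrow> \<not> E x y \<and> \<not> E y x"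
  shows "indep E (A \<union> B)"
  using assms unfolding indep_def by blast

lemma card_le_card_Diff_add_alpha:
  assumes "finite P" "finite I" "indep E I"
  shows "card I \<le> card (I - P) + alpha E P"
proof -
  have "card (I \<inter> P) \<le> alpha E P"
    using card_le_alpha[OF assms(1) _ indep_subset[OF assms(3)], of "I \<inter> P"] by simp
  then show ?thesis using card_Int_Diff[OF assms(2), of P] by linarith
qed

text \<open>For independent \<open>S \<subseteq> X\<close> and \<open>W\<close> disjoint from \<open>X\<close>: the size of a largest independent set
  of \<open>X \<union> W\<close> whose trace on \<open>X\<close> is \<open>S\<close>.\<close>

definition extension_value :: "'a set \<Rightarrow> ('a \<Rightarrow> 'a \<Rightarrow> bool) \<Rightarrow> 'a set \<Rightarrow> 'a set \<Rightarrow> nat" where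
  "extension_value V E W S = card S + alpha E (W - nbh V E S)"

lemma card_le_extension_value:
  assumes "finite W" "finite I" "I \<subseteq> X \<union> W" "indep E I"
  shows "card I \<le> extension_value V E W (I \<inter> X)"
proof -
  have "I - X \<subseteq> W - nbh V E (I \<inter> X)"
    using assms(3,4) unfolding nbh_def indep_def by blast
  then have "card (I - X) \<le> alpha E (W - nbh V E (I \<inter> X))"
    using card_le_alpha[of "W - nbh V E (I \<inter> X)" "I - X" E] assms(1) indep_subset[OF assms(4)]
    by simp
  then show ?thesis
    using card_Int_Diff[OF assms(2), of X] unfolding extension_value_def by linarith
qed

lemma ex_indep_extension:
  assumes G: "graph V E" and P: "component E (V - X) P" and S: "S \<subseteq> X" "X \<subseteq> V" "indep E S"
  obtains I where "I \<subseteq> V" "indep E I"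
    "card I = extension_value V E (V - X - P) S + alpha E (P - nbh V E S)"
proof -
  have "P \<subseteq> V - X" using component_subset[OF P] .
  have "finite P" "finite S"
    using finite_subset[OF _ graphD(1)[OF G]] \<open>P \<subseteq> V - X\<close> S(1,2) by blast+
  then have fin: "finite (V - X - P - nbh V E S)" "finite (P - nbh V E S)" "finite S"
    using graphD(1)[OF G] by auto
  obtain J where J: "J \<subseteq> V - X - P - nbh V E S" "indep E J"
    "card J = alpha E (V - X - P - nbh V E S)"
    using alpha_witness[OF fin(1)] .
  obtain K where K: "K \<subseteq> P - nbh V E S" "indep E K" "card K = alpha E (P - nbh V E S)"
    using alpha_witness[OF fin(2)] .
  have "indep E (J \<union> K)"
  proof (rule indep_Un[OF J(2) K(2)])
    fix y z assume "y \<in> J" "z \<in> K"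
    then have "y \<in> V - X" "y \<notin> P" "z \<in> P" using J(1) K(1) by auto
    then show "\<not> E y z \<and> \<not> E z y"
      using component_closed[OF P] graphD(2)[OF G] by blast
  qed
  moreover have "\<not> E x y \<and> \<not> E y x" if "x \<in> S" "y \<in> J \<union> K" for x y
  proof -
    have "y \<in> V - S" "y \<notin> nbh V E S" using that J(1) K(1) S(1) \<open>P \<subseteq> V - X\<close> by auto
    then show ?thesis using that(1) graphD(2)[OF G] unfolding nbh_def by blast
  qed
  ultimately have "indep E (S \<union> (J \<union> K))" using indep_Un[OF S(3)] by blast
  moreover have "S \<union> (J \<union> K) \<subseteq> V" using J(1) K(1) S(1,2) \<open>P \<subseteq> V - X\<close> by blast
  moreover have "card (S \<union> (J \<union> K)) = card S + card J + card K"
  proof -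
    have "S \<inter> (J \<union> K) = {}" "J \<inter> K = {}" using J(1) K(1) S(1) \<open>P \<subseteq> V - X\<close> by auto
    moreover have "finite J" "finite K" using J(1) K(1) fin finite_subset by auto
    ultimately show ?thesis using fin(3) by (simp add: card_Un_disjoint)
  qed
  ultimately show ?thesis
    using that[of "S \<union> (J \<union> K)"] J(3) K(3) unfolding extension_value_def by argo
qed

text \<open>Dropping \<open>u\<close> frees \<open>p\<close>, which extends every independent set of \<open>W - N(S)\<close>.\<close>

lemma extension_value_le_Diff:
  assumes G: "graph V E" and "W \<subseteq> V" "finite S" "S \<inter> W = {}" "u \<in> S" "p \<in> W" "E p u"
    and blocked: "\<forall>y. E p y \<longrightarrow> y = u \<or> y \<in> nbh V E S"
  shows "extension_value V E W S \<le> extension_value V E W (S - {u})"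
proof -
  have fin: "finite (W - nbh V E S)" "finite (W - nbh V E (S - {u}))"
    using graphD(1)[OF G] assms(2) finite_subset by auto
  obtain J where J: "J \<subseteq> W - nbh V E S" "indep E J" "card J = alpha E (W - nbh V E S)"
    using alpha_witness[OF fin(1)] .
  have "W - nbh V E S \<subseteq> W - nbh V E (S - {u})"
    using assms(4) unfolding nbh_def by blast
  moreover have "p \<notin> nbh V E (S - {u})"
    using blocked graphD(2)[OF G] unfolding nbh_def by blast
  ultimately have sub: "insert p J \<subseteq> W - nbh V E (S - {u})" using J(1) assms(6) by blast
  have "p \<in> nbh V E S"
    using assms(4-7) graphD[OF G] unfolding nbh_def by blast
  then have "p \<notin> J" using J(1) by blast
  have "indep E (insert p J)"
  proof -
    have "\<not> E p z \<and> \<not> E z p" if "z \<in> J" for z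
      using blocked that J(1) assms(4,5) graphD(2)[OF G] by blast
    then show ?thesis using J(2) graphD(3)[OF G] unfolding indep_def by blast
  qed
  then have "Suc (card J) \<le> alpha E (W - nbh V E (S - {u}))"
    using card_le_alpha[OF fin(2) sub] \<open>p \<notin> J\<close> finite_subset[OF J(1) fin(1)] by simp
  moreover have "card S = Suc (card (S - {u}))"
    using card_Suc_Diff1[OF assms(3,5)] by simp
  ultimately show ?thesis using J(3) unfolding extension_value_def by linarith
qed

text \<open>Each of the at most three vertices given by the unicyclic Helly property is blocked by a
  vertex of \<open>S\<close>.\<close>

lemma ex_conf_witness_card_le_3:
  assumes G: "graph V E" and "P \<subseteq> V"
    and unique: "\<forall>cs cs'. is_cycle E P cs \<and> is_cycle E P cs' \<longrightarrow> cycle_edges cs = cycle_edges cs'"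
    and conf: "conf V E P S \<noteq> 0"
  obtains S0 where "S0 \<subseteq> S" "S0 \<noteq> {}" "finite S0" "card S0 \<le> 3" "conf V E P S0 \<noteq> 0"
proof -
  have fin: "finite P" using finite_subset[OF assms(2) graphD(1)[OF G]] .
  have "alpha E (P - nbh V E S) < alpha E P" using conf unfolding conf_def by simp
  then obtain Q where Q: "Q \<subseteq> nbh V E S" "finite Q" "card Q \<le> 3" "alpha E (P - Q) < alpha E P"
    using alpha_Diff_less_three_unicyclic[OF fin _ _ unique] graphD[OF G] by metis
  then have "\<forall>q\<in>Q. \<exists>x. x \<in> S \<and> E x q" unfolding nbh_def by blast
  then obtain f where f: "\<forall>q\<in>Q. f q \<in> S \<and> E (f q) q" by metis
  have "Q \<subseteq> nbh V E (f ` Q)"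
    using f Q(1) unfolding nbh_def by blast
  then have "alpha E (P - nbh V E (f ` Q)) \<le> alpha E (P - Q)"
    using alpha_mono[of "P - Q"] fin by blast
  then have "conf V E P (f ` Q) \<noteq> 0" using Q(4) unfolding conf_def by linarith
  moreover have "f ` Q \<noteq> {}" using Q(4) by auto
  moreover have "card (f ` Q) \<le> 3" using card_image_le[OF Q(2), of f] Q(3) by linarith
  ultimately show ?thesis using that f Q(2) by blast
qed

lemma nonchunk_triple:
  assumes c1: "\<not> (\<exists>v\<in>X. conf V E (V - X) {v} \<ge> card X)"
    and c2: "\<not> (\<exists>u\<in>X. \<exists>v\<in>X. u \<noteq> v \<and> \<not> E u v \<and> conf V E (V - X) {u, v} \<ge> card X)"
    and S0: "S0 \<subseteq> X" "indep E S0" "S0 \<noteq> {}" "finite S0" "card S0 \<le> 3" "\<not> chunk V E X S0"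
  obtains u v w where "S0 = {u, v, w}" "distinct [u, v, w]" "conf V E (V - X) S0 \<ge> card X"
proof -
  have "1 \<le> card S0" using S0(3,4) by (simp add: Suc_le_eq card_gt_0_iff)
  then have big: "conf V E (V - X) S0 \<ge> card X" using S0 unfolding chunk_def by linarith
  have "card S0 \<noteq> 1"
  proof
    assume "card S0 = 1"
    then obtain v where "S0 = {v}" by (auto simp: card_1_singleton_iff)
    then show False using c1 S0(1) big by auto
  qed
  moreover have "card S0 \<noteq> 2"
  proof
    assume "card S0 = 2"
    then obtain u v where "S0 = {u, v}" "u \<noteq> v" by (auto simp: card_2_iff)
    then show False using c2 S0(1,2) big unfolding indep_def by auto
  qed
  ultimately have "card S0 = 3" using \<open>1 \<le> card S0\<close> S0(5) by linarith
  then obtain u v w where "S0 = {u, v, w}" "u \<noteq> v" "v \<noteq> w" "u \<noteq> w" by (auto simp: card_3_iff)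
  then show ?thesis using that big by simp
qed

lemma ex_anchor_triangle_ne:
  assumes "\<not> nonredundant_anchor_triangle V E X P" "anchor_triangle V E X Q"
  obtains Q' where "anchor_triangle V E X Q'" "nbh V E Q' = nbh V E Q" "Q' \<noteq> P"
  using assms unfolding nonredundant_anchor_triangle_def by metis

text \<open>A positive conflict of \<open>S\<close> on \<open>P\<close> forces an anchor triangle \<open>Q' \<noteq> P\<close> whose
  neighbourhood lies in \<open>S\<close>; a vertex of \<open>Q'\<close> with a single outside neighbour \<open>u\<close> then
  pays for removing \<open>u\<close> from \<open>S\<close>.\<close>

lemma ex_removable_of_conf:
  assumes G: "graph V E"
    and XV: "X \<subseteq> V"
    and pf: "pseudoforest E (V - X)"
    and c1: "\<not> (\<exists>v\<in>X. conf V E (V - X) {v} \<ge> card X)"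
    and c2: "\<not> (\<exists>u\<in>X. \<exists>v\<in>X. u \<noteq> v \<and> \<not> E u v \<and> conf V E (V - X) {u, v} \<ge> card X)"
    and c3: "\<forall>u\<in>X. \<forall>v\<in>X. \<forall>w\<in>X. distinct [u, v, w] \<and> indep E {u, v, w} \<and>
               conf V E (V - X) {u, v, w} \<ge> card X \<longrightarrow>
               (\<exists>Q. anchor_triangle V E X Q \<and> nbh V E Q = {u, v, w})"
    and Pc: "component E (V - X) P"
    and Pnr: "\<not> nonredundant_anchor_triangle V E X P"
    and Pconf: "\<forall>X'. chunk V E X X' \<longrightarrow> conf V E P X' = 0"
    and S: "S \<subseteq> X" "indep E S" "conf V E P S \<noteq> 0"
  obtains u where "u \<in> S"
    "extension_value V E (V - X - P) S \<le> extension_value V E (V - X - P) (S - {u})"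
proof -
  have "P \<subseteq> V" using component_subset[OF Pc] by blast
  moreover have "\<forall>cs cs'. is_cycle E P cs \<and> is_cycle E P cs' \<longrightarrow> cycle_edges cs = cycle_edges cs'"
    using pf Pc unfolding pseudoforest_def by blast
  ultimately obtain S0 where S0: "S0 \<subseteq> S" "S0 \<noteq> {}" "finite S0" "card S0 \<le> 3" "conf V E P S0 \<noteq> 0"
    by (rule ex_conf_witness_card_le_3[OF G _ _ S(3)])
  have S0X: "S0 \<subseteq> X" using S0(1) S(1) by blast
  have S0_indep: "indep E S0" using indep_subset[OF S(2) S0(1)] .
  have "\<not> chunk V E X S0" using Pconf S0(5) by auto
  then obtain a b c where "S0 = {a, b, c}" "distinct [a, b, c]" "conf V E (V - X) S0 \<ge> card X"
    by (rule nonchunk_triple[OF c1 c2 S0X S0_indep S0(2-4)])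
  then have "\<exists>Q. anchor_triangle V E X Q \<and> nbh V E Q = S0"
    using c3 S0X S0_indep by simp
  then obtain Q where "anchor_triangle V E X Q" "nbh V E Q = S0" by blast
  then obtain Q' where Q': "anchor_triangle V E X Q'" "nbh V E Q' = S0" "Q' \<noteq> P"
    using ex_anchor_triangle_ne[OF Pnr] by metis
  have "Q' \<subseteq> V - X" using Q'(1) component_subset unfolding anchor_triangle_def by blast
  moreover have "Q' \<inter> P = {}"
    using component_eq[OF graphD(2)[OF G] _ Pc] Q'(1,3) unfolding anchor_triangle_def by blast
  ultimately have QW: "Q' \<subseteq> V - X - P" by blast
  obtain u where "u \<in> S0" using S0(2) by blast
  then obtain p where p: "p \<in> Q'" "E p u" and nbrs: "\<forall>y. E p y \<longrightarrow> y \<in> Q' \<or> y = u"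
    using anchor_triangle_private_neighbour[OF G Q'(1)] Q'(2) by blast
  have "Q' \<inter> S = {}" using QW S(1) by blast
  then have "Q' \<subseteq> nbh V E S" using anchor_triangle_subset_nbh[OF G Q'(1)] Q'(2) S0(1) by blast
  then have blocked: "\<forall>y. E p y \<longrightarrow> y = u \<or> y \<in> nbh V E S" using nbrs by blast
  have "finite S" using finite_subset[OF _ graphD(1)[OF G]] S(1) XV by blast
  have "u \<in> S" using \<open>u \<in> S0\<close> S0(1) by blast
  have "V - X - P \<subseteq> V" "S \<inter> (V - X - P) = {}" "p \<in> V - X - P" using S(1) QW p(1) by auto
  from extension_value_le_Diff[OF G this(1) \<open>finite S\<close> this(2) \<open>u \<in> S\<close> this(3) p(2) blocked]
  show ?thesis using that \<open>u \<in> S\<close> by blast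
qed

lemma ex_indep_subset_argmax_least_card:
  fixes f :: "'a set \<Rightarrow> nat"
  assumes "finite X"
  obtains S where "S \<subseteq> X" "indep E S"
    "\<forall>S'. S' \<subseteq> X \<and> indep E S' \<longrightarrow> f S' \<le> f S"
    "\<forall>S'. S' \<subseteq> X \<and> indep E S' \<and> f S' = f S \<longrightarrow> card S \<le> card S'"
proof -
  let ?C = "{S. S \<subseteq> X \<and> indep E S}"
  have fin: "finite (f ` ?C)" using assms by simp
  have "{} \<in> ?C" unfolding indep_def by simp
  then have "f ` ?C \<noteq> {}" by auto
  then have "Max (f ` ?C) \<in> f ` ?C" by (rule Max_in[OF fin])
  then obtain T where "Max (f ` ?C) = f T" "T \<in> ?C" by (rule imageE)
  then have T: "T \<in> ?C" "\<forall>S'\<in>?C. f S' \<le> f T" using Max_ge[OF fin] by simp_all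
  obtain S where S: "S \<in> ?C \<and> f S = f T" "\<forall>S'. S' \<in> ?C \<and> f S' = f T \<longrightarrow> card S \<le> card S'"
    using ex_has_least_nat[of "\<lambda>S. S \<in> ?C \<and> f S = f T" T card] T(1) by blast
  show ?thesis
  proof (rule that)
    show "S \<subseteq> X" "indep E S" using S(1) by simp_all
    show "\<forall>S'. S' \<subseteq> X \<and> indep E S' \<longrightarrow> f S' \<le> f S" using T(2) S(1) by simp
    show "\<forall>S'. S' \<subseteq> X \<and> indep E S' \<and> f S' = f S \<longrightarrow> card S \<le> card S'" using S by simp
  qed
qed

text \<open>Since \<open>S\<close> has no conflict on \<open>P\<close>, it extends by a maximum independent set of \<open>P\<close>;
  by optimality of \<open>S\<close> the result beats \<open>I'\<close> by \<open>\<alpha>(P)\<close>.\<close>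

lemma ex_indep_card_add_alpha_le:
  assumes G: "graph V E" and XV: "X \<subseteq> V" and Pc: "component E (V - X) P"
    and S: "S \<subseteq> X" "indep E S" "conf V E P S = 0"
    and max: "\<forall>S'. S' \<subseteq> X \<and> indep E S' \<longrightarrow>
      extension_value V E (V - X - P) S' \<le> extension_value V E (V - X - P) S"
    and I': "I' \<subseteq> V - P" "indep E I'"
  obtains I where "I \<subseteq> V" "indep E I" "card I' + alpha E P \<le> card I"
proof -
  have "finite V" "P \<subseteq> V" using graphD(1)[OF G] component_subset[OF Pc] by auto
  then have "alpha E (P - nbh V E S) \<le> alpha E P"
    using alpha_mono[of P "P - nbh V E S" E] finite_subset[of P V] by simp
  then have no_loss: "alpha E (P - nbh V E S) = alpha E P" using S(3) unfolding conf_def by linarith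
  obtain I where I: "I \<subseteq> V" "indep E I"
    "card I = extension_value V E (V - X - P) S + alpha E (P - nbh V E S)"
    by (rule ex_indep_extension[OF G Pc S(1) XV S(2)])
  have "finite (V - X - P)" "finite I'" "I' \<subseteq> X \<union> (V - X - P)"
    using finite_subset[OF I'(1)] \<open>finite V\<close> I'(1) by auto
  then have "card I' \<le> extension_value V E (V - X - P) (I' \<inter> X)"
    by (rule card_le_extension_value[OF _ _ _ I'(2)])
  also have "\<dots> \<le> extension_value V E (V - X - P) S"
    using max[rule_format, of "I' \<inter> X"] indep_subset[OF I'(2), of "I' \<inter> X"] by simp
  finally show ?thesis using that I no_loss by simp
qed

theorem lemma5:
  fixes V :: "'a set" and E :: "'a \<Rightarrow> 'a \<Rightarrow> bool" and X P :: "'a set" and k :: int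
  assumes G: "graph V E"
    and XV: "X \<subseteq> V"
    and pf: "pseudoforest E (V - X)"
    and c1: "\<not> (\<exists>v\<in>X. conf V E (V - X) {v} \<ge> card X)"
    and c2: "\<not> (\<exists>u\<in>X. \<exists>v\<in>X. u \<noteq> v \<and> \<not> E u v \<and> conf V E (V - X) {u, v} \<ge> card X)"
    and c3: "\<forall>u\<in>X. \<forall>v\<in>X. \<forall>w\<in>X. distinct [u, v, w] \<and> indep E {u, v, w} \<and>
               conf V E (V - X) {u, v, w} \<ge> card X \<longrightarrow>
               (\<exists>Q. anchor_triangle V E X Q \<and> nbh V E Q = {u, v, w})"
    and Pc: "component E (V - X) P"
    and Pnr: "\<not> nonredundant_anchor_triangle V E X P"
    and Pconf: "\<forall>X'. chunk V E X X' \<longrightarrow> conf V E P X' = 0"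
  shows "(\<exists>I. I \<subseteq> V \<and> indep E I \<and> int (card I) \<ge> k) \<longleftrightarrow>
         (\<exists>I. I \<subseteq> V - P \<and> indep E I \<and> int (card I) \<ge> k - int (alpha E P))"
proof
  have "finite V" "P \<subseteq> V" using graphD(1)[OF G] component_subset[OF Pc] by auto
  assume "\<exists>I. I \<subseteq> V \<and> indep E I \<and> int (card I) \<ge> k"
  then obtain I where I: "I \<subseteq> V" "indep E I" "int (card I) \<ge> k" by blast
  then have "card I \<le> card (I - P) + alpha E P"
    using card_le_card_Diff_add_alpha \<open>finite V\<close> \<open>P \<subseteq> V\<close> finite_subset by metis
  then show "\<exists>I. I \<subseteq> V - P \<and> indep E I \<and> int (card I) \<ge> k - int (alpha E P)"
    using I indep_subset[OF I(2), of "I - P"] by (intro exI[of _ "I - P"]) auto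
next
  let ?value = "extension_value V E (V - X - P)"
  assume "\<exists>I. I \<subseteq> V - P \<and> indep E I \<and> int (card I) \<ge> k - int (alpha E P)"
  then obtain I' where I': "I' \<subseteq> V - P" "indep E I'" "int (card I') \<ge> k - int (alpha E P)" by blast
  have "finite X" using XV graphD(1)[OF G] finite_subset by blast
  then obtain S where S: "S \<subseteq> X" "indep E S"
    and max: "\<forall>S'. S' \<subseteq> X \<and> indep E S' \<longrightarrow> ?value S' \<le> ?value S"
    and min_card: "\<forall>S'. S' \<subseteq> X \<and> indep E S' \<and> ?value S' = ?value S \<longrightarrow> card S \<le> card S'"
    by (rule ex_indep_subset_argmax_least_card)
  have "conf V E P S = 0"
  proof (rule ccontr)
    assume "conf V E P S \<noteq> 0"
    then obtain u where "u \<in> S" "?value S \<le> ?value (S - {u})"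
      by (rule ex_removable_of_conf[OF G XV pf c1 c2 c3 Pc Pnr Pconf S])
    then have "card S \<le> card (S - {u})"
      using max min_card S indep_subset[OF S(2)] by (meson Diff_subset le_antisym order_trans)
    then show False using \<open>u \<in> S\<close> finite_subset[OF S(1) \<open>finite X\<close>] card_Diff1_less by fastforce
  qed
  then obtain I where "I \<subseteq> V" "indep E I" "card I' + alpha E P \<le> card I"
    by (rule ex_indep_card_add_alpha_le[OF G XV Pc S _ max I'(1,2)])
  then show "\<exists>I. I \<subseteq> V \<and> indep E I \<and> int (card I) \<ge> k" using I'(3) by (intro exI[of _ I]) auto
qed

end
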